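(* Let $M=B\circ S$ where $S$ is Poisson subsampling with rate $r\in[0,1]$ and $B$ is any base mechanism, and let the batch relation be insertion/removal $\simeq_{\pm}$ with induced distance $d_{\mathbb Y}$. Then for all $x\simeq_{K_+,K_-}x'$, $$\Psi_\alpha(m_x\|m_{x'})\le\max_{\mathbf y}\Psi_\alpha\Big(\sum_{i=1}^{K_-+1}b_{y^{(1)}_i}\,\mathrm{Binom}(i-1\mid K_-,r)\ \Big\|\ \sum_{j=1}^{K_++1}b_{y^{(2)}_j}\,\mathrm{Binom}(j-1\mid K_+,r)\Big),$$ where the maximum is over $\mathbf y=(\mathbf y^{(1)},\mathbf y^{(2)})\in\mathbb Y^{K_-+1}\times\mathbb Y^{K_++1}$ subject to $d_{\mathbb Y}(y^{(l)}_t,y^{(l)}_u)\le|t-u|$ for $l\in\{1,2\}$ and all $t,u$, and $d_{\mathbb Y}(y^{(1)}_t,y^{(2)}_u)\le(t-1)+(u-1)$ for all $t,u$.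
   Context: Finite set $\mathbb A$, datasets $x\subseteq\mathbb A$, batches are subsets $y\subseteq x$. Poisson subsampling with rate $r$ has pmf $s_x(y)=r^{|y|}(1-r)^{|x|-|y|}$ for $y\subseteq x$. Base mechanism $B$: each batch $y$ has density $b_y$ on $\mathbb R^D$; $m_x(z)=\sum_y b_y(z)s_x(y)$. Insertion/removal: $y\simeq_\pm y'$ iff $y'=y\cup\{a\}$ for some $a\notin y$ or $y'=y\setminus\{a\}$ for some $a\in y$; $d_{\mathbb Y}$ is the induced distance (length of shortest chain of neighbors). Datasets $x\simeq_{K_+,K_-}x'$ iff $x'=(x\setminus g_-)\cup g_+$ for some $g_-\subseteq x$ with $|g_-|=K_-$ and $g_+$ disjoint from $x$ with $|g_+|=K_+$. $\mathrm{Binom}(k\mid n,r)=\binom nk r^k(1-r)^{n-k}$. $H_\alpha(p\|q)=\int\max\{p-\alpha q,0\}$ ($\alpha\ge0$), $\Lambda_\alpha(p\|q)=\int p^\alpha q^{1-\alpha}$ ($\alpha>1$); $\Psi_\alpha$ is either. *)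

theory Defs
  imports "HOL-Analysis.Analysis"
begin

text \<open>Ground set A is a finite type 'a; datasets and batches are sets of type 'a set;
  the batch space Y is UNIV :: 'a set set. Outputs live in 'b :: euclidean_space (R^D).\<close>

definition poisson_pmf :: "real \<Rightarrow> 'a set \<Rightarrow> 'a set \<Rightarrow> real" where
  "poisson_pmf r x y = (if y \<subseteq> x then r ^ card y * (1 - r) ^ (card x - card y) else 0)"

definition mixture_density ::
  "('a set \<Rightarrow> 'b \<Rightarrow> real) \<Rightarrow> real \<Rightarrow> 'a set \<Rightarrow> 'b \<Rightarrow> real" where
  "mixture_density b r x z = (\<Sum>y\<in>Pow x. b y z * poisson_pmf r x y)"

definition ins_rem_nbr :: "'a set \<Rightarrow> 'a set \<Rightarrow> bool" where
  "ins_rem_nbr y y' \<longleftrightarrow> (\<exists>a. a \<notin> y \<and> y' = insert a y) \<or> (\<exists>a. a \<in> y \<and> y' = y - {a})"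

definition dist_Y :: "'a set \<Rightarrow> 'a set \<Rightarrow> nat" where
  "dist_Y y y' = (LEAST n. (ins_rem_nbr ^^ n) y y')"

definition dataset_nbr :: "nat \<Rightarrow> nat \<Rightarrow> 'a set \<Rightarrow> 'a set \<Rightarrow> bool" where
  "dataset_nbr Kp Km x x' \<longleftrightarrow>
     (\<exists>gm gp. gm \<subseteq> x \<and> card gm = Km \<and> gp \<inter> x = {} \<and> card gp = Kp \<and> x' = (x - gm) \<union> gp)"

definition binom_pmf :: "nat \<Rightarrow> nat \<Rightarrow> real \<Rightarrow> real" where
  "binom_pmf k n r = real (n choose k) * r ^ k * (1 - r) ^ (n - k)"

definition hockey_stick :: "real \<Rightarrow> ('b::euclidean_space \<Rightarrow> real) \<Rightarrow> ('b \<Rightarrow> real) \<Rightarrow> ennreal" where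
  "hockey_stick \<alpha> p q = (\<integral>\<^sup>+ z. ennreal (max (p z - \<alpha> * q z) 0) \<partial>lborel)"

definition renyi_integrand :: "real \<Rightarrow> real \<Rightarrow> real \<Rightarrow> ennreal" where
  "renyi_integrand \<alpha> p q =
     (if q = 0 then (if p = 0 then 0 else \<infinity>) else ennreal (p powr \<alpha> * q powr (1 - \<alpha>)))"

definition renyi_moment :: "real \<Rightarrow> ('b::euclidean_space \<Rightarrow> real) \<Rightarrow> ('b \<Rightarrow> real) \<Rightarrow> ennreal" where
  "renyi_moment \<alpha> p q = (\<integral>\<^sup>+ z. renyi_integrand \<alpha> (p z) (q z) \<partial>lborel)"

end

theory Submission
  imports Defs "HOL-Combinatorics.Multiset_Permutations"
begin

text \<open>
  Write \<open>x = c \<union> g\<^sub>-\<close> and \<open>x' = c \<union> g\<^sub>+\<close> with \<open>c = x - g\<^sub>-\<close>. Poisson subsampling of \<open>x\<close>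
  draws independent subsets \<open>w \<subseteq> c\<close> and \<open>u \<subseteq> g\<^sub>-\<close>; averaging over a uniformly random
  ordering of \<open>g\<^sub>-\<close>, the subset \<open>u\<close> is distributed as the prefix of length
  \<open>Binom(K\<^sub>-, r)\<close> of that ordering. Coupling the orderings of \<open>g\<^sub>-\<close> and \<open>g\<^sub>+\<close> with a common
  \<open>w\<close> thus writes \<open>m\<^sub>x\<close> and \<open>m\<^sub>x'\<close> as the same mixture of pairs of binomial chains whose
  batches \<open>w \<union> prefix\<close> satisfy the distance constraints. Both divergences are integrals of
  a positively homogeneous subadditive integrand, hence jointly convex, so \<open>\<Psi>(m\<^sub>x\<parallel>m\<^sub>x')\<close>
  is at most the worst such pair.
\<close>

lemma poisson_pmf_nonneg: "0 \<le> r \<Longrightarrow> r \<le> 1 \<Longrightarrow> 0 \<le> poisson_pmf r x y"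
  by (simp add: poisson_pmf_def)

lemma binom_pmf_nonneg: "0 \<le> r \<Longrightarrow> r \<le> 1 \<Longrightarrow> 0 \<le> binom_pmf k n r"
  by (simp add: binom_pmf_def)

lemma sum_binom_pmf: "(\<Sum>k=0..n. binom_pmf k n r) = 1"
  using binomial_ring[of r "1 - r" n] by (simp add: binom_pmf_def atLeast0AtMost)

lemma binom_pmf_mult_fact:
  assumes "k \<le> n"
  shows "binom_pmf k n r * (fact k * fact (n - k)) = fact n * (r ^ k * (1 - r) ^ (n - k))"
  using binomial_fact_lemma[OF assms] unfolding binom_pmf_def
  by (metis (no_types, lifting) mult.assoc mult.commute of_nat_fact of_nat_mult)

lemma poisson_pmf_Un:
  assumes "finite A" "finite B" "A \<inter> B = {}" "w \<subseteq> A" "u \<subseteq> B"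
  shows "poisson_pmf r (A \<union> B) (w \<union> u) = poisson_pmf r A w * poisson_pmf r B u"
proof -
  have "finite w" "finite u" using assms finite_subset by blast+
  then have card_wu: "card (w \<union> u) = card w + card u"
    using assms by (intro card_Un_disjoint) auto
  have card_AB: "card (A \<union> B) = card A + card B"
    using assms by (intro card_Un_disjoint) auto
  have "card w \<le> card A" "card u \<le> card B" using assms card_mono by blast+
  then have "card (A \<union> B) - card (w \<union> u) = (card A - card w) + (card B - card u)"
    using card_wu card_AB by simp
  moreover have "w \<union> u \<subseteq> A \<union> B" using assms by auto
  ultimately show ?thesis
    using assms(4,5) unfolding poisson_pmf_def by (simp only: if_True card_wu power_add mult_ac)
qed

lemma sum_Pow_Un_poisson_pmf:
  assumes "finite A" "finite B" "A \<inter> B = {}"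
  shows "(\<Sum>y\<in>Pow (A \<union> B). poisson_pmf r (A \<union> B) y * f y) =
         (\<Sum>w\<in>Pow A. poisson_pmf r A w * (\<Sum>u\<in>Pow B. poisson_pmf r B u * f (w \<union> u)))"
proof -
  have inj: "inj_on (\<lambda>(w, u). w \<union> u) (Pow A \<times> Pow B)"
  proof (rule inj_onI, clarsimp)
    fix w u w' u' assume h: "w \<subseteq> A" "u \<subseteq> B" "w' \<subseteq> A" "u' \<subseteq> B" "w \<union> u = w' \<union> u'"
    then have "w = (w \<union> u) \<inter> A" "w' = (w' \<union> u') \<inter> A" "u = (w \<union> u) \<inter> B" "u' = (w' \<union> u') \<inter> B"
      using assms(3) by auto
    then show "w = w' \<and> u = u'" using h(5) by metis
  qed
  have img: "Pow (A \<union> B) = (\<lambda>(w, u). w \<union> u) ` (Pow A \<times> Pow B)"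
  proof (rule set_eqI, rule iffI)
    fix y assume "y \<in> Pow (A \<union> B)"
    then have "y = (\<lambda>(w, u). w \<union> u) (y \<inter> A, y \<inter> B)" "(y \<inter> A, y \<inter> B) \<in> Pow A \<times> Pow B" by auto
    then show "y \<in> (\<lambda>(w, u). w \<union> u) ` (Pow A \<times> Pow B)" by blast
  qed auto
  have "(\<Sum>y\<in>Pow (A \<union> B). poisson_pmf r (A \<union> B) y * f y) =
        (\<Sum>(w, u)\<in>Pow A \<times> Pow B. poisson_pmf r (A \<union> B) (w \<union> u) * f (w \<union> u))"
    unfolding img by (subst sum.reindex[OF inj]) (simp add: case_prod_unfold)
  also have "\<dots> = (\<Sum>(w, u)\<in>Pow A \<times> Pow B. poisson_pmf r A w * (poisson_pmf r B u * f (w \<union> u)))"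
    using assms by (intro sum.cong refl) (auto simp: poisson_pmf_Un)
  finally show ?thesis
    by (simp add: sum.cartesian_product[symmetric] sum_distrib_left)
qed

lemma card_permutations_of_set_take:
  assumes "finite G" "u \<subseteq> G" "card u = k"
  shows "card {xs \<in> permutations_of_set G. set (take k xs) = u} = fact k * fact (card G - k)"
proof -
  have inj: "inj_on (\<lambda>(ys, zs). ys @ zs) (permutations_of_set u \<times> permutations_of_set (G - u))"
  proof (rule inj_onI, clarsimp)
    fix ys zs ys' zs'
    assume "ys \<in> permutations_of_set u" "ys' \<in> permutations_of_set u" "ys @ zs = ys' @ zs'"
    moreover have "length ys = length ys'"
      using calculation by (metis length_finite_permutations_of_set)
    ultimately show "ys = ys' \<and> zs = zs'" by simp
  qed
  have "{xs \<in> permutations_of_set G. set (take k xs) = u} =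
     (\<lambda>(ys, zs). ys @ zs) ` (permutations_of_set u \<times> permutations_of_set (G - u))"
  proof (rule set_eqI, rule iffI)
    fix xs assume "xs \<in> {xs \<in> permutations_of_set G. set (take k xs) = u}"
    then have xs: "set xs = G" "distinct xs" "set (take k xs) = u"
      by (auto simp: permutations_of_set_def)
    moreover have "set (take k xs) \<inter> set (drop k xs) = {}" "set (take k xs) \<union> set (drop k xs) = G"
      using xs(1,2) by (metis append_take_drop_id distinct_append, metis append_take_drop_id set_append)
    ultimately have "set (drop k xs) = G - u" by auto
    with xs have "(take k xs, drop k xs) \<in> permutations_of_set u \<times> permutations_of_set (G - u)"
      by (auto simp: permutations_of_set_def)
    then show "xs \<in> (\<lambda>(ys, zs). ys @ zs) ` (permutations_of_set u \<times> permutations_of_set (G - u))"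
      by (metis (no_types, lifting) append_take_drop_id case_prod_conv image_eqI)
  next
    fix xs assume "xs \<in> (\<lambda>(ys, zs). ys @ zs) ` (permutations_of_set u \<times> permutations_of_set (G - u))"
    then obtain ys zs where h: "xs = ys @ zs" "set ys = u" "distinct ys" "set zs = G - u" "distinct zs"
      by (auto simp: permutations_of_set_def)
    then have "length ys = k" using assms(3) distinct_card by metis
    then show "xs \<in> {xs \<in> permutations_of_set G. set (take k xs) = u}"
      using h assms(2) by (auto simp: permutations_of_set_def)
  qed
  then show ?thesis
    using assms finite_subset[OF assms(2)]
    by (simp add: card_image[OF inj] card_cartesian_product card_Diff_subset)
qed

lemma sum_permutations_of_set_take:
  fixes f :: "'a set \<Rightarrow> real"
  assumes "finite G" "k \<le> card G"
  shows "(\<Sum>xs\<in>permutations_of_set G. f (set (take k xs))) =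
         fact k * fact (card G - k) * (\<Sum>u\<in>{u\<in>Pow G. card u = k}. f u)"
proof -
  have "(\<lambda>xs. set (take k xs)) ` permutations_of_set G \<subseteq> {u\<in>Pow G. card u = k}"
  proof clarsimp
    fix xs assume "xs \<in> permutations_of_set G"
    then have "set xs = G" "distinct xs" "length xs = card G"
      by (auto simp: permutations_of_set_def length_finite_permutations_of_set)
    then show "set (take k xs) \<subseteq> G \<and> card (set (take k xs)) = k"
      using assms(2) by (auto simp: distinct_card dest: in_set_takeD)
  qed
  then have "(\<Sum>xs\<in>permutations_of_set G. f (set (take k xs))) =
      (\<Sum>u\<in>{u\<in>Pow G. card u = k}.
         \<Sum>xs\<in>{xs \<in> permutations_of_set G. set (take k xs) = u}. f (set (take k xs)))"
    using assms by (intro sum.group[symmetric]) auto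
  also have "\<dots> = (\<Sum>u\<in>{u\<in>Pow G. card u = k}. fact k * fact (card G - k) * f u)"
  proof (intro sum.cong refl)
    fix u assume u: "u \<in> {u\<in>Pow G. card u = k}"
    have "(\<Sum>xs\<in>{xs \<in> permutations_of_set G. set (take k xs) = u}. f (set (take k xs)))
        = (\<Sum>xs\<in>{xs \<in> permutations_of_set G. set (take k xs) = u}. f u)"
      by (intro sum.cong) auto
    then show "(\<Sum>xs\<in>{xs \<in> permutations_of_set G. set (take k xs) = u}. f (set (take k xs))) =
        fact k * fact (card G - k) * f u"
      using card_permutations_of_set_take[OF assms(1), of u k] u by simp
  qed
  finally show ?thesis by (simp add: sum_distrib_left)
qed

lemma sum_poisson_pmf_eq_average_prefixes:
  fixes h :: "'a set \<Rightarrow> real"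
  assumes "finite G"
  shows "(\<Sum>u\<in>Pow G. poisson_pmf r G u * h u) =
     (\<Sum>xs\<in>permutations_of_set G. \<Sum>k=0..card G. binom_pmf k (card G) r * h (set (take k xs)))
       / fact (card G)"
proof -
  define n where "n = card G"
  have "(\<Sum>xs\<in>permutations_of_set G. \<Sum>k=0..n. binom_pmf k n r * h (set (take k xs)))
      = (\<Sum>k=0..n. binom_pmf k n r * (\<Sum>xs\<in>permutations_of_set G. h (set (take k xs))))"
    by (subst sum.swap) (simp add: sum_distrib_left)
  also have "\<dots> = (\<Sum>k=0..n. \<Sum>u\<in>{u\<in>Pow G. card u = k}. fact n * (poisson_pmf r G u * h u))"
  proof (intro sum.cong refl)
    fix k assume "k \<in> {0..n}"
    then have k: "k \<le> n" by simp
    have "poisson_pmf r G u = r ^ k * (1 - r) ^ (n - k)" if "u \<in> {u\<in>Pow G. card u = k}" for u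
      using that by (simp add: poisson_pmf_def n_def)
    then show "binom_pmf k n r * (\<Sum>xs\<in>permutations_of_set G. h (set (take k xs))) =
        (\<Sum>u\<in>{u\<in>Pow G. card u = k}. fact n * (poisson_pmf r G u * h u))"
      using k assms binom_pmf_mult_fact[OF k, of r]
      by (simp add: sum_permutations_of_set_take n_def sum_distrib_left mult.assoc[symmetric])
  qed
  also have "\<dots> = fact n * (\<Sum>u\<in>Pow G. poisson_pmf r G u * h u)"
    using assms by (subst sum.group) (auto simp: n_def card_mono sum_distrib_left)
  finally show ?thesis by (simp add: n_def)
qed

lemma sum_poisson_pmf:
  assumes "finite G"
  shows "(\<Sum>u\<in>Pow G. poisson_pmf r G u) = 1"
  using sum_poisson_pmf_eq_average_prefixes[OF assms, of r "\<lambda>_. 1"] assms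
  by (simp add: sum_binom_pmf)

definition prefix_chain_density ::
  "('a set \<Rightarrow> 'b \<Rightarrow> real) \<Rightarrow> real \<Rightarrow> 'a set \<Rightarrow> 'a list \<Rightarrow> 'b \<Rightarrow> real" where
  "prefix_chain_density b r w xs z =
     (\<Sum>i=1..length xs + 1. b (w \<union> set (take (i - 1) xs)) z * binom_pmf (i - 1) (length xs) r)"

lemma prefix_chain_density_nonneg:
  "0 \<le> r \<Longrightarrow> r \<le> 1 \<Longrightarrow> (\<And>y z. 0 \<le> b y z) \<Longrightarrow> 0 \<le> prefix_chain_density b r w xs z"
  unfolding prefix_chain_density_def by (simp add: sum_nonneg binom_pmf_nonneg)

lemma borel_measurable_prefix_chain_density:
  "(\<And>y. b y \<in> borel_measurable M) \<Longrightarrow> prefix_chain_density b r w xs \<in> borel_measurable M"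
  unfolding prefix_chain_density_def[abs_def] by (auto intro!: borel_measurable_sum borel_measurable_times)

lemma mixture_density_Un_eq_average_chains:
  assumes "finite c" "finite G" "c \<inter> G = {}"
  shows "mixture_density b r (c \<union> G) z = (\<Sum>w\<in>Pow c. poisson_pmf r c w *
     (\<Sum>xs\<in>permutations_of_set G. prefix_chain_density b r w xs z) / fact (card G))"
proof -
  have "prefix_chain_density b r w xs z =
      (\<Sum>k=0..card G. binom_pmf k (card G) r * b (w \<union> set (take k xs)) z)"
    if "xs \<in> permutations_of_set G" for w xs
    unfolding prefix_chain_density_def length_finite_permutations_of_set[OF that]
    using sum.shift_bounds_cl_Suc_ivl[of
        "\<lambda>i. b (w \<union> set (take (i - 1) xs)) z * binom_pmf (i - 1) (card G) r" 0 "card G"]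
    by (simp add: mult.commute)
  then show ?thesis
    unfolding mixture_density_def
    using sum_Pow_Un_poisson_pmf[OF assms, of r "\<lambda>y. b y z"]
      sum_poisson_pmf_eq_average_prefixes[OF assms(2), of r "\<lambda>u. b (_ \<union> u) z"]
    by (simp add: mult.commute)
qed

lemma sum_swap_last_components:
  "(\<Sum>k\<in>A \<times> B \<times> C. f k) = (\<Sum>(a, c, b)\<in>A \<times> C \<times> B. f (a, b, c))"
  by (rule sum.reindex_bij_witness[of _ "\<lambda>(a, b, c). (a, c, b)" "\<lambda>(a, c, b). (a, b, c)"]) auto

lemma sum_coupled_weights:
  assumes "finite c" "finite G" "finite H"
  shows "(\<Sum>(w, xs, ys)\<in>Pow c \<times> permutations_of_set G \<times> permutations_of_set H.
      poisson_pmf r c w / (fact (card G) * fact (card H))) = 1"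
  using assms sum_poisson_pmf[OF assms(1), of r]
  by (simp add: sum.cartesian_product' flip: sum_divide_distrib)

lemma mixture_density_Un_eq_coupled_average:
  assumes "finite c" "finite G" "finite H" "c \<inter> G = {}"
  shows "mixture_density b r (c \<union> G) z =
    (\<Sum>(w, xs, ys)\<in>Pow c \<times> permutations_of_set G \<times> permutations_of_set H.
       poisson_pmf r c w / (fact (card G) * fact (card H)) * prefix_chain_density b r w xs z)"
  using assms
  by (simp add: mixture_density_Un_eq_average_chains sum.cartesian_product' sum_distrib_left
      sum_divide_distrib)

lemma mixture_density_Un_eq_coupled_average':
  assumes "finite c" "finite G" "finite H" "c \<inter> H = {}"
  shows "mixture_density b r (c \<union> H) z =
    (\<Sum>(w, xs, ys)\<in>Pow c \<times> permutations_of_set G \<times> permutations_of_set H.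
       poisson_pmf r c w / (fact (card G) * fact (card H)) * prefix_chain_density b r w ys z)"
  using mixture_density_Un_eq_coupled_average[OF assms(1,3,2,4), of b r z]
  by (subst sum_swap_last_components) (simp add: case_prod_unfold mult.commute)

lemma ins_rem_nbr_sym: "ins_rem_nbr y y' \<Longrightarrow> ins_rem_nbr y' y"
  unfolding ins_rem_nbr_def by (metis Diff_insert_absorb DiffD2 insert_Diff insertI1 singletonI)

lemma relpowp_ins_rem_nbr_sym: "(ins_rem_nbr ^^ n) y y' \<Longrightarrow> (ins_rem_nbr ^^ n) y' y"
proof (induction n arbitrary: y')
  case (Suc n)
  from Suc.prems obtain m where "(ins_rem_nbr ^^ n) y m" "ins_rem_nbr m y'" by (rule relpowp_Suc_E)
  then show ?case using Suc.IH ins_rem_nbr_sym by (metis relpowp_Suc_I2)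
qed simp

lemma relpowp_ins_rem_nbr_Un:
  "distinct ys \<Longrightarrow> set ys \<inter> y = {} \<Longrightarrow> (ins_rem_nbr ^^ length ys) y (y \<union> set ys)"
proof (induction ys arbitrary: y)
  case (Cons a ys)
  have "ins_rem_nbr y (insert a y)" using Cons.prems unfolding ins_rem_nbr_def by auto
  moreover have "(ins_rem_nbr ^^ length ys) (insert a y) (insert a y \<union> set ys)"
    using Cons.IH[of "insert a y"] Cons.prems by simp
  ultimately have "(ins_rem_nbr ^^ Suc (length ys)) y (insert a y \<union> set ys)"
    by (rule relpowp_Suc_I2)
  then show ?case by simp
qed simp

lemma dist_Y_le: "(ins_rem_nbr ^^ n) y y' \<Longrightarrow> dist_Y y y' \<le> n"
  unfolding dist_Y_def by (rule Least_le)

lemma relpowp_ins_rem_nbr_take: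
  assumes "distinct xs" "set xs \<inter> w = {}" "a \<le> b" "b \<le> length xs"
  shows "(ins_rem_nbr ^^ (b - a)) (w \<union> set (take a xs)) (w \<union> set (take b xs))"
proof -
  define ys where "ys = take (b - a) (drop a xs)"
  have take_b: "take b xs = take a xs @ ys"
    unfolding ys_def using assms(3) by (metis le_add_diff_inverse take_add)
  then have "distinct ys" "set ys \<inter> (w \<union> set (take a xs)) = {}"
    using assms(1,2) distinct_take[OF assms(1), of b] set_take_subset[of b xs] by auto
  moreover have "length ys = b - a" using assms unfolding ys_def by simp
  ultimately show ?thesis
    using relpowp_ins_rem_nbr_Un[of ys "w \<union> set (take a xs)"] take_b by (simp add: Un_assoc)
qed

lemma dist_Y_prefixes_le:
  assumes "distinct xs" "set xs \<inter> w = {}" "a \<le> length xs" "b \<le> length xs"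
  shows "dist_Y (w \<union> set (take a xs)) (w \<union> set (take b xs)) \<le> nat \<bar>int a - int b\<bar>"
proof (cases "a \<le> b")
  case True
  then show ?thesis
    using relpowp_ins_rem_nbr_take[OF assms(1,2) True assms(4)] by (auto dest!: dist_Y_le)
next
  case False
  then have "(ins_rem_nbr ^^ (a - b)) (w \<union> set (take a xs)) (w \<union> set (take b xs))"
    using assms by (intro relpowp_ins_rem_nbr_sym[OF relpowp_ins_rem_nbr_take]) auto
  with False show ?thesis by (auto dest: dist_Y_le)
qed

lemma dist_Y_prefixes_disjoint_le:
  assumes "distinct xs" "distinct ys" "set xs \<inter> w = {}" "set ys \<inter> w = {}"
    "a \<le> length xs" "b \<le> length ys"
  shows "dist_Y (w \<union> set (take a xs)) (w \<union> set (take b ys)) \<le> a + b"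
proof -
  have "(ins_rem_nbr ^^ a) (w \<union> set (take a xs)) w"
    using relpowp_ins_rem_nbr_take[OF assms(1,3), of 0 a] assms(5)
    by (auto intro: relpowp_ins_rem_nbr_sym)
  moreover have "(ins_rem_nbr ^^ b) w (w \<union> set (take b ys))"
    using relpowp_ins_rem_nbr_take[OF assms(2,4), of 0 b] assms(6) by auto
  ultimately show ?thesis
    by (intro dist_Y_le) (auto simp: relpowp_add)
qed

lemma prefix_chains_feasible:
  assumes "distinct xs" "distinct ys" "set xs \<inter> w = {}" "set ys \<inter> w = {}"
  defines "y1 \<equiv> \<lambda>i. w \<union> set (take (i - 1) xs)" and "y2 \<equiv> \<lambda>j. w \<union> set (take (j - 1) ys)"
  shows "(\<forall>t\<in>{1..length xs + 1}. \<forall>u\<in>{1..length xs + 1}. dist_Y (y1 t) (y1 u) \<le> nat \<bar>int t - int u\<bar>) \<and>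
    (\<forall>t\<in>{1..length ys + 1}. \<forall>u\<in>{1..length ys + 1}. dist_Y (y2 t) (y2 u) \<le> nat \<bar>int t - int u\<bar>) \<and>
    (\<forall>t\<in>{1..length xs + 1}. \<forall>u\<in>{1..length ys + 1}. dist_Y (y1 t) (y2 u) \<le> (t - 1) + (u - 1))"
  unfolding y1_def y2_def using assms(1-4)
  by (auto intro!: order.trans[OF dist_Y_prefixes_le[of xs w]] order.trans[OF dist_Y_prefixes_le[of ys w]]
      order.trans[OF dist_Y_prefixes_disjoint_le[of xs ys w]])

lemma dataset_nbr_common_part:
  assumes "dataset_nbr Kp Km x x'"
  obtains c gm gp where "x = c \<union> gm" "x' = c \<union> gp" "c \<inter> gm = {}" "c \<inter> gp = {}" "gm \<inter> gp = {}"
    "card gm = Km" "card gp = Kp"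
proof -
  obtain gm gp where "gm \<subseteq> x" "card gm = Km" "gp \<inter> x = {}" "card gp = Kp" "x' = (x - gm) \<union> gp"
    using assms unfolding dataset_nbr_def by blast
  then show ?thesis by (intro that[of "x - gm" gm gp]) auto
qed

definition sublinear_integrand :: "(real \<Rightarrow> real \<Rightarrow> ennreal) \<Rightarrow> bool" where
  "sublinear_integrand F \<longleftrightarrow> case_prod F \<in> borel_measurable (borel \<Otimes>\<^sub>M borel) \<and>
     (\<forall>c p q. 0 \<le> c \<longrightarrow> 0 \<le> p \<longrightarrow> 0 \<le> q \<longrightarrow> F (c * p) (c * q) = ennreal c * F p q) \<and>
     (\<forall>p1 q1 p2 q2. 0 \<le> p1 \<longrightarrow> 0 \<le> q1 \<longrightarrow> 0 \<le> p2 \<longrightarrow> 0 \<le> q2 \<longrightarrow>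
        F (p1 + p2) (q1 + q2) \<le> F p1 q1 + F p2 q2)"

lemma sublinear_integrand_sum_le:
  assumes F: "sublinear_integrand F" and "\<And>i. 0 \<le> P i" "\<And>i. 0 \<le> Q i"
  shows "F (\<Sum>i\<in>I. P i) (\<Sum>i\<in>I. Q i) \<le> (\<Sum>i\<in>I. F (P i) (Q i))"
proof -
  have "F (0 * 0) (0 * 0) = ennreal 0 * F 0 0"
    using F unfolding sublinear_integrand_def by blast
  then have F_0: "F 0 0 = 0" by simp
  show ?thesis
  proof (induction I rule: infinite_finite_induct)
    case (insert a I)
    have "F (P a + sum P I) (Q a + sum Q I) \<le> F (P a) (Q a) + F (sum P I) (sum Q I)"
      using assms unfolding sublinear_integrand_def by (simp add: sum_nonneg)
    also have "\<dots> \<le> F (P a) (Q a) + (\<Sum>i\<in>I. F (P i) (Q i))"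
      using insert.IH by (rule add_left_mono)
    finally show ?case using insert by simp
  qed (simp_all add: F_0)
qed

lemma nn_integral_sublinear_mixture_le:
  fixes P Q :: "'i \<Rightarrow> 'b::euclidean_space \<Rightarrow> real"
  assumes F: "sublinear_integrand F" and "finite I"
    and wt: "\<And>k. 0 \<le> wt k" "(\<Sum>k\<in>I. wt k) = 1"
    and P: "\<And>k z. 0 \<le> P k z" "\<And>k. P k \<in> borel_measurable lborel"
    and Q: "\<And>k z. 0 \<le> Q k z" "\<And>k. Q k \<in> borel_measurable lborel"
    and bound: "\<And>k. k \<in> I \<Longrightarrow> (\<integral>\<^sup>+ z. F (P k z) (Q k z) \<partial>lborel) \<le> S"
  shows "(\<integral>\<^sup>+ z. F (\<Sum>k\<in>I. wt k * P k z) (\<Sum>k\<in>I. wt k * Q k z) \<partial>lborel) \<le> S"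
proof -
  have F_meas: "case_prod F \<in> borel_measurable (borel \<Otimes>\<^sub>M borel)"
    using F unfolding sublinear_integrand_def by blast
  have meas: "(\<lambda>z. F (P k z) (Q k z)) \<in> borel_measurable lborel" for k
    using measurable_compose[OF measurable_Pair[OF P(2) Q(2)] F_meas] by simp
  have "(\<integral>\<^sup>+ z. F (\<Sum>k\<in>I. wt k * P k z) (\<Sum>k\<in>I. wt k * Q k z) \<partial>lborel)
     \<le> (\<integral>\<^sup>+ z. (\<Sum>k\<in>I. ennreal (wt k) * F (P k z) (Q k z)) \<partial>lborel)"
  proof (rule nn_integral_mono)
    fix z
    have "F (\<Sum>k\<in>I. wt k * P k z) (\<Sum>k\<in>I. wt k * Q k z) \<le> (\<Sum>k\<in>I. F (wt k * P k z) (wt k * Q k z))"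
      using wt P Q by (intro sublinear_integrand_sum_le[OF F]) auto
    also have "\<dots> = (\<Sum>k\<in>I. ennreal (wt k) * F (P k z) (Q k z))"
      using F wt P Q unfolding sublinear_integrand_def by simp
    finally show "F (\<Sum>k\<in>I. wt k * P k z) (\<Sum>k\<in>I. wt k * Q k z) \<le>
        (\<Sum>k\<in>I. ennreal (wt k) * F (P k z) (Q k z))" .
  qed
  also have "\<dots> = (\<Sum>k\<in>I. ennreal (wt k) * (\<integral>\<^sup>+ z. F (P k z) (Q k z) \<partial>lborel))"
    using meas by (simp add: nn_integral_sum nn_integral_cmult)
  also have "\<dots> \<le> (\<Sum>k\<in>I. ennreal (wt k) * S)"
    using bound by (intro sum_mono mult_left_mono) auto
  also have "\<dots> = ennreal (\<Sum>k\<in>I. wt k) * S"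
    using wt(1) by (simp add: sum_ennreal flip: sum_distrib_right)
  also have "\<dots> = S"
    using wt(2) by simp
  finally show ?thesis .
qed

lemma sublinear_integrand_hockey_stick:
  "sublinear_integrand (\<lambda>p q. ennreal (max (p - \<alpha> * q) 0))"
  unfolding sublinear_integrand_def
proof (intro conjI allI impI)
  show "(\<lambda>(p, q). ennreal (max (p - \<alpha> * q) 0)) \<in> borel_measurable (borel \<Otimes>\<^sub>M borel)"
    unfolding case_prod_beta by measurable
next
  fix c p q :: real assume "0 \<le> c"
  then have "max (c * p - \<alpha> * (c * q)) 0 = c * max (p - \<alpha> * q) 0"
    by (simp add: max_mult_distrib_left algebra_simps)
  with \<open>0 \<le> c\<close> show "ennreal (max (c * p - \<alpha> * (c * q)) 0) = ennreal c * ennreal (max (p - \<alpha> * q) 0)"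
    by (simp add: ennreal_mult)
next
  fix p1 q1 p2 q2 :: real
  have "max (p1 + p2 - \<alpha> * (q1 + q2)) 0 \<le> max (p1 - \<alpha> * q1) 0 + max (p2 - \<alpha> * q2) 0"
    by (simp add: algebra_simps)
  then show "ennreal (max (p1 + p2 - \<alpha> * (q1 + q2)) 0) \<le>
      ennreal (max (p1 - \<alpha> * q1) 0) + ennreal (max (p2 - \<alpha> * q2) 0)"
    by (simp add: ennreal_plus[symmetric] ennreal_leI del: ennreal_plus)
qed

lemma mult_powr_divide_powr:
  fixes p q :: real
  assumes "0 < q"
  shows "q * (p / q) powr a = p powr a * q powr (1 - a)"
  using assms by (simp add: powr_divide powr_diff)

lemma powr_perspective_subadditive:
  fixes p1 p2 q1 q2 \<alpha> :: real
  assumes "1 \<le> \<alpha>" "0 \<le> p1" "0 \<le> p2" "0 < q1" "0 < q2"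
  shows "(p1 + p2) powr \<alpha> * (q1 + q2) powr (1 - \<alpha>) \<le>
    p1 powr \<alpha> * q1 powr (1 - \<alpha>) + p2 powr \<alpha> * q2 powr (1 - \<alpha>)"
proof (cases "p1 = 0 \<or> p2 = 0")
  case True
  have "(q1 + q2) powr (1 - \<alpha>) \<le> q2 powr (1 - \<alpha>)" "(q1 + q2) powr (1 - \<alpha>) \<le> q1 powr (1 - \<alpha>)"
    using assms by (auto intro: powr_mono2')
  with True assms show ?thesis by (auto simp: mult_left_mono)
next
  case False
  with assms have p: "0 < p1" "0 < p2" by auto
  define s where "s = q1 + q2"
  define t where "t = q2 / s"
  have s: "0 < s" using assms by (simp add: s_def)
  have t: "0 \<le> t" "t \<le> 1" "1 - t = q1 / s" using assms s by (auto simp: t_def s_def field_simps)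
  have "((1 - t) *\<^sub>R (p1 / q1) + t *\<^sub>R (p2 / q2)) powr \<alpha> \<le>
      (1 - t) * (p1 / q1) powr \<alpha> + t * (p2 / q2) powr \<alpha>"
    using convex_onD[OF powr_convex[OF assms(1)] t(1,2), of "p1 / q1" "p2 / q2"] assms p by simp
  moreover have "(1 - t) *\<^sub>R (p1 / q1) + t *\<^sub>R (p2 / q2) = (p1 + p2) / s"
    unfolding t(3) using assms s by (simp add: t_def field_simps)
  ultimately have "s * ((p1 + p2) / s) powr \<alpha> \<le> s * ((1 - t) * (p1 / q1) powr \<alpha> + t * (p2 / q2) powr \<alpha>)"
    using s by (simp add: mult_left_mono)
  also have "\<dots> = q1 * (p1 / q1) powr \<alpha> + q2 * (p2 / q2) powr \<alpha>"
    unfolding t(3) using s by (simp add: t_def field_simps)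
  finally show ?thesis
    using assms s by (simp add: mult_powr_divide_powr s_def)
qed

lemma sublinear_integrand_renyi:
  assumes "1 \<le> \<alpha>"
  shows "sublinear_integrand (renyi_integrand \<alpha>)"
  unfolding sublinear_integrand_def
proof (intro conjI allI impI)
  show "case_prod (renyi_integrand \<alpha>) \<in> borel_measurable (borel \<Otimes>\<^sub>M borel)"
    unfolding renyi_integrand_def case_prod_beta by measurable
next
  fix c p q :: real assume "0 \<le> c" "0 \<le> p" "0 \<le> q"
  show "renyi_integrand \<alpha> (c * p) (c * q) = ennreal c * renyi_integrand \<alpha> p q"
  proof (cases "c = 0")
    case False
    with \<open>0 \<le> c\<close> have "0 < c" by simp
    then have "(c * p) powr \<alpha> * (c * q) powr (1 - \<alpha>) = c * (p powr \<alpha> * q powr (1 - \<alpha>))"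
      by (simp add: powr_mult powr_add[symmetric] mult_ac)
    with \<open>0 < c\<close> show ?thesis by (simp add: renyi_integrand_def ennreal_mult ennreal_mult_top)
  qed (simp add: renyi_integrand_def)
next
  fix p1 q1 p2 q2 :: real
  assume h: "0 \<le> p1" "0 \<le> q1" "0 \<le> p2" "0 \<le> q2"
  show "renyi_integrand \<alpha> (p1 + p2) (q1 + q2) \<le> renyi_integrand \<alpha> p1 q1 + renyi_integrand \<alpha> p2 q2"
  proof (cases "q1 = 0 \<or> q2 = 0")
    case True
    with h show ?thesis by (auto simp: renyi_integrand_def)
  next
    case False
    with h have "0 < q1" "0 < q2" by auto
    with powr_perspective_subadditive[OF assms h(1,3)] h show ?thesis
      by (auto simp: renyi_integrand_def ennreal_plus[symmetric] ennreal_leI simp del: ennreal_plus)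
  qed
qed

lemma sublinear_divergence_subsampled_le_SUP_chains:
  fixes b :: "('a::finite) set \<Rightarrow> ('b::euclidean_space) \<Rightarrow> real"
    and Psi :: "('b \<Rightarrow> real) \<Rightarrow> ('b \<Rightarrow> real) \<Rightarrow> ennreal"
  assumes r: "0 \<le> r" "r \<le> 1"
    and dens_meas: "\<And>y. b y \<in> borel_measurable lborel"
    and dens_nonneg: "\<And>y z. 0 \<le> b y z"
    and F: "sublinear_integrand F"
    and Psi: "Psi = (\<lambda>p q. \<integral>\<^sup>+ z. F (p z) (q z) \<partial>lborel)"
    and nbr: "dataset_nbr Kp Km x x'"
  shows "Psi (mixture_density b r x) (mixture_density b r x') \<le>
    (SUP yy \<in> {(y1 :: nat \<Rightarrow> 'a set, y2 :: nat \<Rightarrow> 'a set).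
               (\<forall>t\<in>{1..Km+1}. \<forall>u\<in>{1..Km+1}. dist_Y (y1 t) (y1 u) \<le> nat \<bar>int t - int u\<bar>) \<and>
               (\<forall>t\<in>{1..Kp+1}. \<forall>u\<in>{1..Kp+1}. dist_Y (y2 t) (y2 u) \<le> nat \<bar>int t - int u\<bar>) \<and>
               (\<forall>t\<in>{1..Km+1}. \<forall>u\<in>{1..Kp+1}. dist_Y (y1 t) (y2 u) \<le> (t - 1) + (u - 1))}.
       Psi (\<lambda>z. \<Sum>i=1..Km+1. b (fst yy i) z * binom_pmf (i - 1) Km r)
           (\<lambda>z. \<Sum>j=1..Kp+1. b (snd yy j) z * binom_pmf (j - 1) Kp r))"
  (is "_ \<le> (SUP yy \<in> ?feasible. ?Psi_chains yy)")
proof -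
  obtain c gm gp where x: "x = c \<union> gm" "x' = c \<union> gp"
    and disj: "c \<inter> gm = {}" "c \<inter> gp = {}" "gm \<inter> gp = {}" and card: "card gm = Km" "card gp = Kp"
    using dataset_nbr_common_part[OF nbr] .
  define I where "I = Pow c \<times> permutations_of_set gm \<times> permutations_of_set gp"
  define wt where "wt = (\<lambda>(w, xs :: 'a list, ys :: 'a list). poisson_pmf r c w / (fact Km * fact Kp))"
  define P where "P = (\<lambda>(w, xs, ys :: 'a list). prefix_chain_density b r w xs)"
  define Q where "Q = (\<lambda>(w, xs :: 'a list, ys). prefix_chain_density b r w ys)"
  have "mixture_density b r x = (\<lambda>z. \<Sum>k\<in>I. wt k * P k z)"
    using disj card
    by (simp add: fun_eq_iff x I_def wt_def P_def case_prod_unfold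
        mixture_density_Un_eq_coupled_average[where H = gp])
  moreover have "mixture_density b r x' = (\<lambda>z. \<Sum>k\<in>I. wt k * Q k z)"
    using disj card
    by (simp add: fun_eq_iff x I_def wt_def Q_def case_prod_unfold
        mixture_density_Un_eq_coupled_average'[where G = gm])
  ultimately have "Psi (mixture_density b r x) (mixture_density b r x') =
      (\<integral>\<^sup>+ z. F (\<Sum>k\<in>I. wt k * P k z) (\<Sum>k\<in>I. wt k * Q k z) \<partial>lborel)"
    by (simp add: Psi)
  also have "\<dots> \<le> (SUP yy \<in> ?feasible. ?Psi_chains yy)"
  proof (rule nn_integral_sublinear_mixture_le[OF F])
    show "(\<Sum>k\<in>I. wt k) = 1"
      using sum_coupled_weights[of c gm gp r] card by (simp add: I_def wt_def)
    fix k assume "k \<in> I"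
    obtain w xs ys where k: "k = (w, xs, ys)" by (cases k)
    with \<open>k \<in> I\<close> have "distinct xs" "distinct ys" "length xs = Km" "length ys = Kp"
      "set xs \<inter> w = {}" "set ys \<inter> w = {}"
      using disj card by (auto simp: I_def permutations_of_set_def distinct_card)
    then have "((\<lambda>i. w \<union> set (take (i - 1) xs)), (\<lambda>j. w \<union> set (take (j - 1) ys))) \<in> ?feasible"
      using prefix_chains_feasible[of xs ys w] by simp
    then have "?Psi_chains ((\<lambda>i. w \<union> set (take (i - 1) xs)), (\<lambda>j. w \<union> set (take (j - 1) ys)))
        \<le> (SUP yy \<in> ?feasible. ?Psi_chains yy)"
      by (rule SUP_upper)
    then show "(\<integral>\<^sup>+ z. F (P k z) (Q k z) \<partial>lborel) \<le> (SUP yy \<in> ?feasible. ?Psi_chains yy)"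
      by (simp only: Psi k P_def Q_def prefix_chain_density_def[abs_def]
          \<open>length xs = Km\<close> \<open>length ys = Kp\<close> prod.case fst_conv snd_conv)
  qed (use r dens_nonneg dens_meas in \<open>auto simp: I_def wt_def P_def Q_def case_prod_unfold
      poisson_pmf_nonneg prefix_chain_density_nonneg borel_measurable_prefix_chain_density\<close>)
  finally show ?thesis .
qed

theorem theorem3p7:
  fixes b :: "('a::finite) set \<Rightarrow> ('b::euclidean_space) \<Rightarrow> real"
    and r \<alpha> :: real and Kp Km :: nat and x x' :: "'a set"
    and Psi :: "('b \<Rightarrow> real) \<Rightarrow> ('b \<Rightarrow> real) \<Rightarrow> ennreal"
  assumes r: "0 \<le> r" "r \<le> 1"
    and dens_meas: "\<And>y. b y \<in> borel_measurable lborel"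
    and dens_nonneg: "\<And>y z. 0 \<le> b y z"
    and dens_int: "\<And>y. (\<integral>\<^sup>+ z. ennreal (b y z) \<partial>lborel) = 1"
    and Psi: "(Psi = hockey_stick \<alpha> \<and> 0 \<le> \<alpha>) \<or> (Psi = renyi_moment \<alpha> \<and> 1 < \<alpha>)"
    and nbr: "dataset_nbr Kp Km x x'"
  shows "Psi (mixture_density b r x) (mixture_density b r x') \<le>
    (SUP yy \<in> {(y1 :: nat \<Rightarrow> 'a set, y2 :: nat \<Rightarrow> 'a set).
               (\<forall>t\<in>{1..Km+1}. \<forall>u\<in>{1..Km+1}. dist_Y (y1 t) (y1 u) \<le> nat \<bar>int t - int u\<bar>) \<and>
               (\<forall>t\<in>{1..Kp+1}. \<forall>u\<in>{1..Kp+1}. dist_Y (y2 t) (y2 u) \<le> nat \<bar>int t - int u\<bar>) \<and>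
               (\<forall>t\<in>{1..Km+1}. \<forall>u\<in>{1..Kp+1}. dist_Y (y1 t) (y2 u) \<le> (t - 1) + (u - 1))}.
       Psi (\<lambda>z. \<Sum>i=1..Km+1. b (fst yy i) z * binom_pmf (i - 1) Km r)
           (\<lambda>z. \<Sum>j=1..Kp+1. b (snd yy j) z * binom_pmf (j - 1) Kp r))"
proof -
  obtain F where F: "sublinear_integrand F" "Psi = (\<lambda>p q. \<integral>\<^sup>+ z. F (p z) (q z) \<partial>lborel)"
  proof (cases "Psi = hockey_stick \<alpha>")
    case True
    then show ?thesis
      using that[OF sublinear_integrand_hockey_stick[of \<alpha>]] by (simp add: fun_eq_iff hockey_stick_def)
  next
    case False
    with Psi have "Psi = renyi_moment \<alpha>" "1 \<le> \<alpha>" by auto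
    then show ?thesis
      using that[OF sublinear_integrand_renyi] by (simp add: fun_eq_iff renyi_moment_def)
  qed
  show ?thesis
    by (rule sublinear_divergence_subsampled_le_SUP_chains[OF r dens_meas dens_nonneg F nbr])
qed

end
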